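(* Let $R$ be a ring and $\mathbf x$ a parameter sequence on $R$. Then $\operatorname{ht}(\mathbf x)R\ge\ell(\mathbf x)$.
   Context: All rings are commutative with identity. For $x\in R$ let $C(x)$ be the complex $0\to R\to R_x\to 0$ ($R$ in degree $0$, natural localization map); for $\mathbf x=x_1,\dots,x_\ell$ put $C(\mathbf x)=C(x_1)\otimes_R\cdots\otimes_R C(x_\ell)$ and let $H^i_{\mathbf x}(M)$ be the $i$th cohomology of $C(\mathbf x)\otimes_RM$; $\ell(\mathbf x)=\ell$. Let $K(x)$ be $0\to R\xrightarrow{x}R\to 0$ (degrees $1,0$), $K(\mathbf x)=K(x_1)\otimes\cdots\otimes K(x_\ell)$, $H_i(\mathbf x)$ its homology. For $m\ge n$ the chain map $K(\mathbf x^m)\to K(\mathbf x^n)$ ($\mathbf x^m=x_1^m,\dots,x_\ell^m$) is the tensor product of maps given by multiplication by $x_i^{m-n}$ in degree $1$ and identity in degree $0$. $\mathbf x$ is weakly proregular if for every $n$ there is $m\ge n$ with $H_i(\mathbf x^m)\to H_i(\mathbf x^n)$ zero for all $i\ge1$. $\mathbf x$ is a parameter sequence on $R$ if it is weakly proregular, $(\mathbf x)R\neq R$, and $H^{\ell(\mathbf x)}_{\mathbf x}(R)_p\neq0$ for every prime $p\supseteq(\mathbf x)R$. *)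

theory Defs
  imports Main "HOL-Library.Extended_Nat"
begin

definition is_ideal :: "'a::comm_ring_1 set \<Rightarrow> bool" where
  "is_ideal I \<longleftrightarrow> 0 \<in> I \<and> (\<forall>a\<in>I. \<forall>b\<in>I. a + b \<in> I) \<and> (\<forall>r. \<forall>a\<in>I. r * a \<in> I)"

definition prime_ideal :: "'a::comm_ring_1 set \<Rightarrow> bool" where
  "prime_ideal P \<longleftrightarrow> is_ideal P \<and> P \<noteq> UNIV \<and> (\<forall>a b. a * b \<in> P \<longrightarrow> a \<in> P \<or> b \<in> P)"

definition ideal_gen :: "'a::comm_ring_1 list \<Rightarrow> 'a set" where
  "ideal_gen xs = {(\<Sum>i<length xs. r i * xs ! i) | r. True}"

definition prime_height :: "'a::comm_ring_1 set \<Rightarrow> enat" where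
  "prime_height P = Sup {enat n | n. \<exists>f. (\<forall>i\<le>n. prime_ideal (f i)) \<and>
                                       (\<forall>i<n. f i \<subset> f (Suc i)) \<and> f n = P}"

text \<open>Height of an ideal: infimum of heights of primes containing it (= infinity if none).\<close>
definition ideal_height :: "'a::comm_ring_1 set \<Rightarrow> enat" where
  "ideal_height I = Inf {prime_height P | P. prime_ideal P \<and> I \<subseteq> P}"

text \<open>A chain of K(x) in homological degree i: coefficients c S on the basis vectors
  e_S = e_{j1} \<and> ... \<and> e_{ji}, S \<subseteq> {0..<l}, card S = i (zero elsewhere).\<close>
definition kchain :: "nat \<Rightarrow> nat \<Rightarrow> (nat set \<Rightarrow> 'a::comm_ring_1) \<Rightarrow> bool" where
  "kchain l i c \<longleftrightarrow> (\<forall>S. c S \<noteq> 0 \<longrightarrow> S \<subseteq> {..<l} \<and> card S = i)"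

text \<open>Differential of K(x) = K(x_1) \<otimes> ... \<otimes> K(x_l) (Koszul sign convention):
  d(e_S) = sum over j in S of (-1)^(number of elements of S below j) x_j e_(S - {j}).\<close>
definition kdiff :: "'a::comm_ring_1 list \<Rightarrow> (nat set \<Rightarrow> 'a) \<Rightarrow> nat set \<Rightarrow> 'a" where
  "kdiff xs c T = (if T \<subseteq> {..<length xs} then
      (\<Sum>j\<in>{..<length xs} - T. (-1) ^ card {k\<in>T. k < j} * xs ! j * c (insert j T))
    else 0)"

definition kcycle :: "'a::comm_ring_1 list \<Rightarrow> nat \<Rightarrow> (nat set \<Rightarrow> 'a) \<Rightarrow> bool" where
  "kcycle xs i c \<longleftrightarrow> kchain (length xs) i c \<and> kdiff xs c = (\<lambda>_. 0)"

definition kboundary :: "'a::comm_ring_1 list \<Rightarrow> nat \<Rightarrow> (nat set \<Rightarrow> 'a) \<Rightarrow> bool" where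
  "kboundary xs i c \<longleftrightarrow> (\<exists>b. kchain (length xs) (Suc i) b \<and> c = kdiff xs b)"

definition seq_pow :: "'a::comm_ring_1 list \<Rightarrow> nat \<Rightarrow> 'a list" where
  "seq_pow xs m = map (\<lambda>x. x ^ m) xs"

text \<open>Chain map K(x^m) \<rightarrow> K(x^n): tensor product of (x_i^(m-n) in degree 1, id in degree 0),
  i.e. e_S \<mapsto> (prod of x_j^(m-n), j in S) e_S.\<close>
definition kmap :: "'a::comm_ring_1 list \<Rightarrow> nat \<Rightarrow> nat \<Rightarrow> (nat set \<Rightarrow> 'a) \<Rightarrow> nat set \<Rightarrow> 'a" where
  "kmap xs m n c S = (\<Prod>j\<in>S. (xs ! j) ^ (m - n)) * c S"

definition koszul_hom_map_zero :: "'a::comm_ring_1 list \<Rightarrow> nat \<Rightarrow> nat \<Rightarrow> nat \<Rightarrow> bool" where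
  "koszul_hom_map_zero xs m n i \<longleftrightarrow>
     (\<forall>c. kcycle (seq_pow xs m) i c \<longrightarrow> kboundary (seq_pow xs n) i (kmap xs m n c))"

definition weakly_proregular :: "'a::comm_ring_1 list \<Rightarrow> bool" where
  "weakly_proregular xs \<longleftrightarrow>
     (\<forall>n. \<exists>m\<ge>n. \<forall>i\<ge>1. koszul_hom_map_zero xs m n i)"

text \<open>Fractions a / y^k in R_y, equality in R_y.\<close>
definition loc_eq :: "'a::comm_ring_1 \<Rightarrow> 'a \<times> nat \<Rightarrow> 'a \<times> nat \<Rightarrow> bool" where
  "loc_eq y p q \<longleftrightarrow> (\<exists>n. y ^ n * (fst p * y ^ snd q - fst q * y ^ snd p) = 0)"

text \<open>C(x)^l = R_{x_1} \<otimes> ... \<otimes> R_{x_l} = R_y with y = x_1 ... x_l, and C(x)^(l+1) = 0, so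
  H^l_x(R) = R_y / N where N is the image of the last differential, i.e. the sum of the
  images of the localization maps R_{y/x_i} \<rightarrow> R_y (c / (y/x_i)^M \<mapsto> c x_i^M / y^M).
  A fraction (a,k) represents the zero class iff it lies in N.\<close>
definition cech_top_zero :: "'a::comm_ring_1 list \<Rightarrow> 'a \<times> nat \<Rightarrow> bool" where
  "cech_top_zero xs p \<longleftrightarrow>
     (\<exists>c M. loc_eq (prod_list xs) p ((\<Sum>i<length xs. c i * (xs ! i) ^ M), M))"

text \<open>(H^l_x(R))_P \<noteq> 0: some element h of H^l_x(R) is not killed by any s outside P.\<close>
definition cech_top_localized_nonzero :: "'a::comm_ring_1 list \<Rightarrow> 'a set \<Rightarrow> bool" where
  "cech_top_localized_nonzero xs P \<longleftrightarrow>
     (\<exists>a k. \<forall>s. s \<notin> P \<longrightarrow> \<not> cech_top_zero xs (s * a, k))"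

definition parameter_sequence :: "'a::comm_ring_1 list \<Rightarrow> bool" where
  "parameter_sequence xs \<longleftrightarrow> weakly_proregular xs \<and> ideal_gen xs \<noteq> UNIV \<and>
     (\<forall>P. prime_ideal P \<and> ideal_gen xs \<subseteq> P \<longrightarrow> cech_top_localized_nonzero xs P)"

end

theory Submission
  imports Defs
begin

text \<open>The height bound follows from the vanishing of \<open>H\<^sup>l\<^sub>x(R)\<^sub>P\<close> at every prime \<open>P\<close>
  of height \<open>< l\<close>. This vanishing is proved by induction
  on \<open>l\<close>, writing \<open>x = z, x'\<close>. If \<open>z \<notin> P\<close>, a power of \<open>z\<close> kills every class. If
  \<open>z \<in> P\<close> and the class of \<open>a / y\<^sup>k\<close> survived at \<open>P\<close> (where \<open>y = z y'\<close> is the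
  product of the sequence), the elements \<open>r\<close> with
  \<open>z\<^sup>j r a / y'\<^sup>k = 0\<close> in \<open>H\<^sup>l\<^sup>-\<^sup>1\<^sub>x\<^sub>'(R)\<close> for some \<open>j\<close> would form a \<open>z\<close>-saturated
  ideal \<open>W \<subseteq> P\<close>. A prime \<open>Q \<supseteq> W\<close> maximal among those avoiding \<open>z\<close> and \<open>R - P\<close> lies
  strictly inside \<open>P\<close>, so it has height \<open>< l - 1\<close>, and the induction hypothesis at \<open>Q\<close>
  produces an element of \<open>W\<close> outside \<open>Q\<close>.\<close>

lemma is_idealI:
  assumes "0 \<in> I" "\<And>a b. a \<in> I \<Longrightarrow> b \<in> I \<Longrightarrow> a + b \<in> I" "\<And>r a. a \<in> I \<Longrightarrow> r * a \<in> I"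
  shows "is_ideal I"
  using assms unfolding is_ideal_def by blast

lemma ideal_zero: "is_ideal I \<Longrightarrow> 0 \<in> I"
  and ideal_add: "is_ideal I \<Longrightarrow> a \<in> I \<Longrightarrow> b \<in> I \<Longrightarrow> a + b \<in> I"
  and ideal_mult_left: "is_ideal I \<Longrightarrow> a \<in> I \<Longrightarrow> r * a \<in> I"
  unfolding is_ideal_def by blast+

lemma ideal_mult_right: "is_ideal I \<Longrightarrow> a \<in> I \<Longrightarrow> a * r \<in> I"
  using ideal_mult_left[of I a r] by (simp add: mult.commute)

lemma prime_ideal_one_notin: "prime_ideal P \<Longrightarrow> 1 \<notin> P"
  unfolding prime_ideal_def using ideal_mult_right[of P 1] by auto

lemma prime_ideal_mult_notin: "prime_ideal P \<Longrightarrow> a \<notin> P \<Longrightarrow> b \<notin> P \<Longrightarrow> a * b \<notin> P"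
  unfolding prime_ideal_def by blast

lemma prime_ideal_power_notin: "prime_ideal P \<Longrightarrow> z \<notin> P \<Longrightarrow> z ^ k \<notin> P"
  by (induction k) (simp_all add: prime_ideal_one_notin prime_ideal_mult_notin)

lemma is_ideal_colon: "is_ideal I \<Longrightarrow> is_ideal {r. r * a \<in> I}"
  by (rule is_idealI) (auto simp: ideal_zero ideal_add ideal_mult_left distrib_right mult.assoc)

definition saturation :: "'a::comm_ring_1 \<Rightarrow> 'a set \<Rightarrow> 'a set" where
  "saturation z I = {r. \<exists>j. z ^ j * r \<in> I}"

lemma is_ideal_saturation:
  assumes I: "is_ideal I"
  shows "is_ideal (saturation z I)"
proof (rule is_idealI)
  show "0 \<in> saturation z I"
    using ideal_zero[OF I] unfolding saturation_def by auto
next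
  fix a b assume "a \<in> saturation z I" "b \<in> saturation z I"
  then obtain i j where "z ^ i * a \<in> I" "z ^ j * b \<in> I"
    unfolding saturation_def by blast
  then have "z ^ j * (z ^ i * a) + z ^ i * (z ^ j * b) \<in> I"
    by (simp add: ideal_add[OF I] ideal_mult_left[OF I])
  also have "z ^ j * (z ^ i * a) + z ^ i * (z ^ j * b) = z ^ (i + j) * (a + b)"
    by (simp add: power_add algebra_simps)
  finally show "a + b \<in> saturation z I"
    unfolding saturation_def by blast
next
  fix r a assume "a \<in> saturation z I"
  then obtain j where "z ^ j * a \<in> I"
    unfolding saturation_def by blast
  then have "r * (z ^ j * a) \<in> I"
    by (rule ideal_mult_left[OF I])
  then show "r * a \<in> saturation z I"
    unfolding saturation_def by (auto simp: ac_simps)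
qed

lemma saturation_cancel_power:
  assumes "z ^ j * r \<in> saturation z I"
  shows "r \<in> saturation z I"
proof -
  obtain i where "z ^ i * (z ^ j * r) \<in> I"
    using assms unfolding saturation_def by blast
  then have "z ^ (i + j) * r \<in> I"
    by (simp add: power_add mult.assoc)
  then show ?thesis
    unfolding saturation_def by blast
qed

lemma is_ideal_add_multiples:
  assumes I: "is_ideal I"
  shows "is_ideal {q + r * a | q r. q \<in> I}"
proof (rule is_idealI)
  show "0 \<in> {q + r * a | q r. q \<in> I}"
    using ideal_zero[OF I] by (intro CollectI exI[of _ 0] exI[of _ 0]) simp
next
  fix x y assume "x \<in> {q + r * a | q r. q \<in> I}" "y \<in> {q + r * a | q r. q \<in> I}"
  then obtain q1 r1 q2 r2 where "x = q1 + r1 * a" "q1 \<in> I" "y = q2 + r2 * a" "q2 \<in> I"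
    by blast
  then show "x + y \<in> {q + r * a | q r. q \<in> I}"
    by (intro CollectI exI[of _ "q1 + q2"] exI[of _ "r1 + r2"]) (simp add: ideal_add[OF I] algebra_simps)
next
  fix c x assume "x \<in> {q + r * a | q r. q \<in> I}"
  then obtain q r where "x = q + r * a" "q \<in> I"
    by blast
  then show "c * x \<in> {q + r * a | q r. q \<in> I}"
    by (intro CollectI exI[of _ "c * q"] exI[of _ "c * r"]) (simp add: ideal_mult_left[OF I] algebra_simps)
qed

lemma is_ideal_Union_chain:
  assumes "C \<in> chains {I. is_ideal I}" "C \<noteq> {}"
  shows "is_ideal (\<Union>C)"
proof (rule is_idealI)
  have ideals: "\<And>I. I \<in> C \<Longrightarrow> is_ideal I"
    using chainsD2[OF assms(1)] by blast
  show "0 \<in> \<Union>C"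
    using assms(2) ideals ideal_zero by blast
  show "r * a \<in> \<Union>C" if "a \<in> \<Union>C" for r a
    using that ideals ideal_mult_left by blast
  fix a b assume "a \<in> \<Union>C" "b \<in> \<Union>C"
  then obtain I J where IJ: "I \<in> C" "J \<in> C" "a \<in> I" "b \<in> J"
    by blast
  from chainsD[OF assms(1) IJ(1,2)] have "a \<in> I \<union> J \<and> b \<in> I \<union> J \<and> I \<union> J \<in> C"
    using IJ by (auto simp: sup_absorb1 sup_absorb2)
  then show "a + b \<in> \<Union>C"
    using ideals ideal_add by blast
qed

lemma prime_ideal_if_maximal_disjoint:
  assumes Q: "is_ideal Q" and QU: "Q \<inter> U = {}" and one: "1 \<in> U"
    and mult: "\<And>u v. u \<in> U \<Longrightarrow> v \<in> U \<Longrightarrow> u * v \<in> U"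
    and maximal: "\<And>I. is_ideal I \<Longrightarrow> Q \<subseteq> I \<Longrightarrow> I \<inter> U = {} \<Longrightarrow> I = Q"
  shows "prime_ideal Q"
proof -
  have meets_U: "\<exists>q r. q \<in> Q \<and> q + r * a \<in> U" if "a \<notin> Q" for a
  proof (rule ccontr)
    assume "\<not> ?thesis"
    then have "{q + r * a | q r. q \<in> Q} \<inter> U = {}"
      by blast
    moreover have "Q \<subseteq> {q + r * a | q r. q \<in> Q}"
      by (force intro: exI[of _ 0])
    moreover have "a \<in> {q + r * a | q r. q \<in> Q}"
      using ideal_zero[OF Q] by (intro CollectI exI[of _ 0] exI[of _ 1]) simp
    ultimately show False
      using maximal[OF is_ideal_add_multiples[OF Q]] that by blast
  qed
  have "a \<in> Q \<or> b \<in> Q" if ab: "a * b \<in> Q" for a b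
  proof (rule ccontr)
    assume "\<not> (a \<in> Q \<or> b \<in> Q)"
    then obtain q1 r1 q2 r2 where q: "q1 \<in> Q" "q2 \<in> Q"
      and U: "q1 + r1 * a \<in> U" "q2 + r2 * b \<in> U"
      using meets_U by meson
    have "(q1 + r1 * a) * (q2 + r2 * b) = (q1 + r1 * a) * q2 + q1 * (r2 * b) + (r1 * r2) * (a * b)"
      by (simp add: algebra_simps)
    also have "\<dots> \<in> Q"
      using q ab by (simp add: ideal_add[OF Q] ideal_mult_left[OF Q] ideal_mult_right[OF Q])
    finally show False
      using mult[OF U] QU by blast
  qed
  moreover have "Q \<noteq> UNIV"
    using QU one by blast
  ultimately show ?thesis
    unfolding prime_ideal_def using Q by blast
qed

lemma exists_prime_ideal_disjoint:
  assumes W: "is_ideal W" and WU: "W \<inter> U = {}" and one: "1 \<in> U"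
    and mult: "\<And>u v. u \<in> U \<Longrightarrow> v \<in> U \<Longrightarrow> u * v \<in> U"
  shows "\<exists>Q. prime_ideal Q \<and> W \<subseteq> Q \<and> Q \<inter> U = {}"
proof -
  define A where "A = {I. is_ideal I \<and> W \<subseteq> I \<and> I \<inter> U = {}}"
  have "\<exists>V\<in>A. \<forall>X\<in>C. X \<subseteq> V" if C: "C \<in> chains A" for C
  proof (cases "C = {}")
    case True
    then show ?thesis
      using W WU unfolding A_def by auto
  next
    case False
    have "C \<in> chains {I. is_ideal I}"
      using C unfolding A_def chains_def chain_subset_def by auto
    then have "is_ideal (\<Union>C)"
      using False by (rule is_ideal_Union_chain)
    then have "\<Union>C \<in> A"
      using chainsD2[OF C] False unfolding A_def by blast
    then show ?thesis
      by blast
  qed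
  then obtain Q where "Q \<in> A" and maximal: "\<forall>X\<in>A. Q \<subseteq> X \<longrightarrow> X = Q"
    using Zorn_Lemma2[of A] by blast
  then have "is_ideal Q" "W \<subseteq> Q" "Q \<inter> U = {}"
    unfolding A_def by auto
  moreover have "prime_ideal Q"
  proof (rule prime_ideal_if_maximal_disjoint[OF calculation(1,3) one mult])
    fix I assume "is_ideal I" "Q \<subseteq> I" "I \<inter> U = {}"
    then show "I = Q"
      using maximal \<open>W \<subseteq> Q\<close> unfolding A_def by blast
  qed
  ultimately show ?thesis
    by blast
qed

lemma exists_prime_ideal_below_avoiding:
  assumes P: "prime_ideal P" and "z \<in> P" and W: "is_ideal W" "W \<subseteq> P"
    and saturated: "\<And>j r. z ^ j * r \<in> W \<Longrightarrow> r \<in> W"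
  shows "\<exists>Q. prime_ideal Q \<and> W \<subseteq> Q \<and> Q \<subset> P"
proof -
  define U where "U = {u * z ^ j | u j. u \<notin> P}"
  have one: "1 \<in> U" and z: "z \<in> U" and outside_P: "\<And>q. q \<notin> P \<Longrightarrow> q \<in> U"
    using prime_ideal_one_notin[OF P] unfolding U_def by (force intro: exI[of _ 0] exI[of _ 1])+
  have mult: "u * v \<in> U" if uv: "u \<in> U" "v \<in> U" for u v
  proof -
    obtain u' i v' j where "u = u' * z ^ i" "u' \<notin> P" "v = v' * z ^ j" "v' \<notin> P"
      using uv unfolding U_def by blast
    moreover have "u' * v' \<notin> P"
      using prime_ideal_mult_notin[OF P] calculation by blast
    moreover have "u * v = (u' * v') * z ^ (i + j)"
      using calculation by (simp add: power_add ac_simps)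
    ultimately show ?thesis
      unfolding U_def by blast
  qed
  have "W \<inter> U = {}"
  proof (rule ccontr)
    assume "W \<inter> U \<noteq> {}"
    then obtain u j where "z ^ j * u \<in> W" "u \<notin> P"
      unfolding U_def by (auto simp: mult.commute)
    then show False
      using saturated \<open>W \<subseteq> P\<close> by blast
  qed
  then obtain Q where Q: "prime_ideal Q" "W \<subseteq> Q" "Q \<inter> U = {}"
    using exists_prime_ideal_disjoint[OF W(1) _ one mult] by blast
  have "Q \<subset> P"
    using Q(3) outside_P z \<open>z \<in> P\<close> by blast
  then show ?thesis
    using Q by blast
qed

lemma prime_height_psubset:
  assumes Q: "prime_ideal Q" and P: "prime_ideal P" and "Q \<subset> P"
  shows "eSuc (prime_height Q) \<le> prime_height P"
proof -
  define chain_lengths where "chain_lengths X = {enat n | n. \<exists>f. (\<forall>i\<le>n. prime_ideal (f i)) \<and>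
      (\<forall>i<n. f i \<subset> f (Suc i)) \<and> f n = X}" for X :: "'a set"
  have "enat 0 \<in> chain_lengths Q"
    using Q unfolding chain_lengths_def by auto
  have extend: "eSuc x \<in> chain_lengths P" if x: "x \<in> chain_lengths Q" for x
  proof -
    obtain n f where "x = enat n" and f: "\<forall>i\<le>n. prime_ideal (f i)" "\<forall>i<n. f i \<subset> f (Suc i)" "f n = Q"
      using x unfolding chain_lengths_def by blast
    define g where "g i = (if i \<le> n then f i else P)" for i
    have "\<forall>i\<le>Suc n. prime_ideal (g i)" "\<forall>i<Suc n. g i \<subset> g (Suc i)" "g (Suc n) = P"
      using f P \<open>Q \<subset> P\<close> unfolding g_def by (auto simp: less_Suc_eq)
    then show ?thesis
      unfolding chain_lengths_def \<open>x = enat n\<close> eSuc_enat by blast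
  qed
  have "eSuc (prime_height Q) = Sup (eSuc ` chain_lengths Q)"
    unfolding prime_height_def chain_lengths_def[symmetric]
    using \<open>enat 0 \<in> chain_lengths Q\<close> by (intro eSuc_Sup) blast
  also have "\<dots> \<le> Sup (chain_lengths P)"
    using extend by (intro Sup_subset_mono) blast
  finally show ?thesis
    unfolding prime_height_def chain_lengths_def .
qed

lemma is_ideal_ideal_gen: "is_ideal (ideal_gen xs)"
proof (rule is_idealI)
  show "0 \<in> ideal_gen xs"
    unfolding ideal_gen_def by (auto intro: exI[of _ "\<lambda>_. 0"])
  fix a b assume "a \<in> ideal_gen xs" "b \<in> ideal_gen xs"
  then obtain r s where "a = (\<Sum>i<length xs. r i * xs ! i)" "b = (\<Sum>i<length xs. s i * xs ! i)"
    unfolding ideal_gen_def by blast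
  then show "a + b \<in> ideal_gen xs"
    unfolding ideal_gen_def
    by (auto simp: sum.distrib distrib_right intro: exI[of _ "\<lambda>i. r i + s i"])
next
  fix c a assume "a \<in> ideal_gen xs"
  then obtain r where "a = (\<Sum>i<length xs. r i * xs ! i)"
    unfolding ideal_gen_def by blast
  then show "c * a \<in> ideal_gen xs"
    unfolding ideal_gen_def
    by (auto simp: sum_distrib_left mult.assoc intro: exI[of _ "\<lambda>i. c * r i"])
qed

lemma ideal_gen_Cons_subset: "ideal_gen xs \<subseteq> ideal_gen (z # xs)"
proof
  fix a assume "a \<in> ideal_gen xs"
  then obtain r where "a = (\<Sum>i<length xs. r i * xs ! i)"
    unfolding ideal_gen_def by blast
  then have "a = (\<Sum>i<length (z # xs). (if i = 0 then 0 else r (i - 1)) * (z # xs) ! i)"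
    by (simp add: sum.lessThan_Suc_shift del: sum.lessThan_Suc)
  then show "a \<in> ideal_gen (z # xs)"
    unfolding ideal_gen_def by (intro CollectI exI[of _ "\<lambda>i. if i = 0 then 0 else r (i - 1)"]) simp
qed

lemma Cons_mem_ideal_gen: "z \<in> ideal_gen (z # xs)"
proof -
  have "z = (\<Sum>i<length (z # xs). (if i = 0 then 1 else 0) * (z # xs) ! i)"
    by (simp add: sum.lessThan_Suc_shift del: sum.lessThan_Suc)
  then show ?thesis
    unfolding ideal_gen_def by (intro CollectI exI[of _ "\<lambda>i. if i = 0 then 1 else 0"]) simp
qed

lemma seq_pow_Cons: "seq_pow (z # xs) m = z ^ m # seq_pow xs m"
  by (simp add: seq_pow_def)

lemma mem_ideal_gen_seq_pow:
  "v \<in> ideal_gen (seq_pow xs m) \<longleftrightarrow> (\<exists>d. v = (\<Sum>i<length xs. d i * xs ! i ^ m))"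
proof -
  have "(\<Sum>i<length xs. d i * seq_pow xs m ! i) = (\<Sum>i<length xs. d i * xs ! i ^ m)" for d
    unfolding seq_pow_def by (rule sum.cong) simp_all
  then show ?thesis
    unfolding ideal_gen_def by (simp add: seq_pow_def)
qed

lemma ideal_gen_seq_pow_mult_prod_list:
  assumes "v \<in> ideal_gen (seq_pow xs m)"
  shows "v * prod_list xs \<in> ideal_gen (seq_pow xs (Suc m))"
proof -
  obtain d where d: "v = (\<Sum>i<length xs. d i * xs ! i ^ m)"
    using assms unfolding mem_ideal_gen_seq_pow by blast
  have "\<exists>e. prod_list xs = xs ! i * e" if "i < length xs" for i
    using that by (simp add: dvd_def[symmetric] prod_list_dvd)
  then obtain e where e: "\<And>i. i < length xs \<Longrightarrow> prod_list xs = xs ! i * e i"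
    by metis
  have "v * prod_list xs = (\<Sum>i<length xs. d i * xs ! i ^ m * prod_list xs)"
    by (simp add: d sum_distrib_right)
  also have "\<dots> = (\<Sum>i<length xs. (d i * e i) * xs ! i ^ Suc m)"
    by (rule sum.cong) (simp_all add: e algebra_simps)
  finally show ?thesis
    unfolding mem_ideal_gen_seq_pow by (auto intro!: exI[of _ "\<lambda>i. d i * e i"])
qed

text \<open>With \<open>y = x\<^sub>1 \<cdots> x\<^sub>l\<close>, the fraction \<open>b / y\<^sup>k\<close> represents zero in
  \<open>H\<^sup>l\<^sub>x(R)\<close> as soon as \<open>b y\<^sup>t \<in> (x\<^sub>1\<^sup>t\<^sup>+\<^sup>k, \<dots>, x\<^sub>l\<^sup>t\<^sup>+\<^sup>k)\<close> for some \<open>t\<close>.\<close>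
definition top_class_vanishes :: "'a::comm_ring_1 list \<Rightarrow> 'a \<Rightarrow> nat \<Rightarrow> bool" where
  "top_class_vanishes xs b k \<longleftrightarrow> (\<exists>t. b * prod_list xs ^ t \<in> ideal_gen (seq_pow xs (t + k)))"

lemma top_class_vanishes_witness_mono:
  assumes "b * prod_list xs ^ t \<in> ideal_gen (seq_pow xs (t + k))" "t \<le> t'"
  shows "b * prod_list xs ^ t' \<in> ideal_gen (seq_pow xs (t' + k))"
  using assms(2)
proof (induction rule: dec_induct)
  case base
  show ?case using assms(1) .
next
  case (step n)
  then show ?case
    using ideal_gen_seq_pow_mult_prod_list[OF step.IH] by (simp add: ac_simps)
qed

lemma is_ideal_top_class_vanishes: "is_ideal {b. top_class_vanishes xs b k}"
proof (rule is_idealI)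
  let ?I = "\<lambda>t. ideal_gen (seq_pow xs (t + k))"
  show "0 \<in> {b. top_class_vanishes xs b k}"
    unfolding top_class_vanishes_def using ideal_zero[OF is_ideal_ideal_gen] by auto
  fix a b assume "a \<in> {b. top_class_vanishes xs b k}" "b \<in> {b. top_class_vanishes xs b k}"
  then obtain s t where "a * prod_list xs ^ s \<in> ?I s" "b * prod_list xs ^ t \<in> ?I t"
    unfolding top_class_vanishes_def by blast
  then have "a * prod_list xs ^ max s t \<in> ?I (max s t)" "b * prod_list xs ^ max s t \<in> ?I (max s t)"
    by (auto intro: top_class_vanishes_witness_mono)
  then have "(a + b) * prod_list xs ^ max s t \<in> ?I (max s t)"
    unfolding distrib_right by (rule ideal_add[OF is_ideal_ideal_gen])
  then show "a + b \<in> {b. top_class_vanishes xs b k}"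
    unfolding top_class_vanishes_def by blast
next
  fix r a assume "a \<in> {b. top_class_vanishes xs b k}"
  then obtain t where "a * prod_list xs ^ t \<in> ideal_gen (seq_pow xs (t + k))"
    unfolding top_class_vanishes_def by blast
  then have "r * a * prod_list xs ^ t \<in> ideal_gen (seq_pow xs (t + k))"
    unfolding mult.assoc by (rule ideal_mult_left[OF is_ideal_ideal_gen])
  then show "r * a \<in> {b. top_class_vanishes xs b k}"
    unfolding top_class_vanishes_def by blast
qed

lemma top_class_vanishes_Cons_power: "top_class_vanishes (z # xs) (z ^ k * a) k"
proof -
  have "z ^ k \<in> ideal_gen (seq_pow (z # xs) k)"
    unfolding seq_pow_Cons by (rule Cons_mem_ideal_gen)
  then have "z ^ k * a * prod_list (z # xs) ^ 0 \<in> ideal_gen (seq_pow (z # xs) (0 + k))"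
    by (simp add: ideal_mult_right[OF is_ideal_ideal_gen])
  then show ?thesis
    unfolding top_class_vanishes_def by blast
qed

lemma top_class_vanishes_Cons:
  assumes "top_class_vanishes xs (z ^ j * a) k"
  shows "top_class_vanishes (z # xs) a k"
proof -
  obtain t0 where "z ^ j * a * prod_list xs ^ t0 \<in> ideal_gen (seq_pow xs (t0 + k))"
    using assms unfolding top_class_vanishes_def by blast
  then have "z ^ j * a * prod_list xs ^ (t0 + j) \<in> ideal_gen (seq_pow xs (t0 + j + k))"
    by (rule top_class_vanishes_witness_mono) simp
  then have "z ^ t0 * (z ^ j * a * prod_list xs ^ (t0 + j)) \<in> ideal_gen (seq_pow (z # xs) (t0 + j + k))"
    using ideal_gen_Cons_subset ideal_mult_left[OF is_ideal_ideal_gen] unfolding seq_pow_Cons by blast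
  also have "z ^ t0 * (z ^ j * a * prod_list xs ^ (t0 + j)) = a * prod_list (z # xs) ^ (t0 + j)"
    by (simp add: power_add power_mult_distrib ac_simps)
  finally show ?thesis
    unfolding top_class_vanishes_def by blast
qed

lemma cech_top_zero_if_top_class_vanishes:
  assumes "top_class_vanishes xs b k"
  shows "cech_top_zero xs (b, k)"
proof -
  obtain t d where d: "b * prod_list xs ^ t = (\<Sum>i<length xs. d i * xs ! i ^ (t + k))"
    using assms unfolding top_class_vanishes_def mem_ideal_gen_seq_pow by blast
  have "b * prod_list xs ^ (t + k) = (b * prod_list xs ^ t) * prod_list xs ^ k"
    by (simp add: power_add mult.assoc)
  also have "\<dots> = (\<Sum>i<length xs. d i * xs ! i ^ (t + k)) * prod_list xs ^ k"
    by (simp only: d)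
  finally have "loc_eq (prod_list xs) (b, k) ((\<Sum>i<length xs. d i * xs ! i ^ (t + k)), t + k)"
    unfolding loc_eq_def by (intro exI[of _ 0]) simp
  then show ?thesis
    unfolding cech_top_zero_def by blast
qed

text \<open>This is the vanishing of \<open>H\<^sup>l\<^sub>x(R)\<^sub>P\<close> for \<open>ht P < l\<close>.\<close>
lemma top_class_vanishes_locally:
  fixes xs :: "'a::comm_ring_1 list"
  assumes "prime_ideal P" "prime_height P < enat (length xs)"
  shows "\<exists>s. s \<notin> P \<and> top_class_vanishes xs (s * a) k"
  using assms
proof (induction xs arbitrary: P)
  case Nil
  then show ?case
    by (simp add: zero_enat_def[symmetric])
next
  case (Cons z xs)
  note P = \<open>prime_ideal P\<close>
  show ?case
  proof (cases "z \<in> P")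
    case False
    then show ?thesis
      using prime_ideal_power_notin[OF P] top_class_vanishes_Cons_power by blast
  next
    case z_in_P: True
    show ?thesis
    proof (rule ccontr)
      assume no_witness: "\<not> ?thesis"
      define W where "W = saturation z {r. top_class_vanishes xs (r * a) k}"
      have "is_ideal {r. top_class_vanishes xs (r * a) k}"
        using is_ideal_colon[OF is_ideal_top_class_vanishes] by simp
      then have "is_ideal W"
        unfolding W_def by (rule is_ideal_saturation)
      moreover have "W \<subseteq> P"
        using no_witness top_class_vanishes_Cons unfolding W_def saturation_def
        by (fastforce simp: mult.assoc)
      ultimately obtain Q where Q: "prime_ideal Q" "W \<subseteq> Q" "Q \<subset> P"
        using exists_prime_ideal_below_avoiding[OF P z_in_P] saturation_cancel_power
        unfolding W_def by blast
      have "eSuc (prime_height Q) < eSuc (enat (length xs))"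
        using prime_height_psubset[OF Q(1) P Q(3)] Cons.prems(2) by (simp add: eSuc_enat)
      then obtain s where "s \<notin> Q" "top_class_vanishes xs (s * a) k"
        using Cons.IH[OF Q(1)] by auto
      moreover from this(2) have "s \<in> W"
        unfolding W_def saturation_def by (auto intro: exI[of _ 0])
      ultimately show False
        using Q(2) by blast
    qed
  qed
qed

theorem proposition3p5:
  fixes xs :: "'a::comm_ring_1 list"
  assumes "parameter_sequence xs"
  shows "ideal_height (ideal_gen xs) \<ge> enat (length xs)"
  unfolding ideal_height_def
proof (rule Inf_greatest)
  fix h assume "h \<in> {prime_height P |P. prime_ideal P \<and> ideal_gen xs \<subseteq> P}"
  then obtain P where h: "h = prime_height P" and P: "prime_ideal P" "ideal_gen xs \<subseteq> P"
    by blast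
  then obtain a k where nonzero: "\<And>s. s \<notin> P \<Longrightarrow> \<not> cech_top_zero xs (s * a, k)"
    using assms unfolding parameter_sequence_def cech_top_localized_nonzero_def by blast
  show "enat (length xs) \<le> h"
  proof (rule ccontr)
    assume "\<not> enat (length xs) \<le> h"
    then have "prime_height P < enat (length xs)"
      using h by simp
    then obtain s where "s \<notin> P" "top_class_vanishes xs (s * a) k"
      using top_class_vanishes_locally[OF P(1)] by blast
    then show False
      using nonzero cech_top_zero_if_top_class_vanishes by blast
  qed
qed

end
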